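(* Let $(S,<_S)$ be an order. The following are equivalent: (1) $(S,<_S)$ does not embed $R_{2,2}$; (2) for every $x,x'\in S$ the sets $u(x),u(x')$ are $\subseteq$-comparable; (3) for every $x,x'\in S$ the sets $d(x),d(x')$ are $\subseteq$-comparable.
   Context: An order $(S,<_S)$ is a set with a strict partial order (antisymmetric, transitive). An embedding of $(S,<_S)$ into $(R,<_R)$ is an injection $\pi$ with $x<_S y\iff\pi(x)<_R\pi(y)$. $R_{2,2}$ is the order on four elements $\{x_0,x_1,y_0,y_1\}$ whose only relations are $x_0<y_0$ and $x_1<y_1$. For $x\in S$: $d(x)=\{z\in S\mid z<_S x\}$ and $u(x)=\{z\in S\mid x<_S z\}$. *)

theory Defs
  imports Main
begin

definition strict_order :: "'a set \<Rightarrow> ('a \<Rightarrow> 'a \<Rightarrow> bool) \<Rightarrow> bool" where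
  "strict_order S lt \<longleftrightarrow>
     (\<forall>x\<in>S. \<not> lt x x) \<and>
     (\<forall>x\<in>S. \<forall>y\<in>S. lt x y \<longrightarrow> \<not> lt y x) \<and>
     (\<forall>x\<in>S. \<forall>y\<in>S. \<forall>z\<in>S. lt x y \<longrightarrow> lt y z \<longrightarrow> lt x z)"

definition embeds :: "'b set \<Rightarrow> ('b \<Rightarrow> 'b \<Rightarrow> bool) \<Rightarrow> 'a set \<Rightarrow> ('a \<Rightarrow> 'a \<Rightarrow> bool) \<Rightarrow> bool" where
  "embeds T ltT S ltS \<longleftrightarrow>
     (\<exists>\<pi>. inj_on \<pi> T \<and> \<pi> ` T \<subseteq> S \<and>
          (\<forall>x\<in>T. \<forall>y\<in>T. ltT x y \<longleftrightarrow> ltS (\<pi> x) (\<pi> y)))"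

datatype R22_elem = X0 | X1 | Y0 | Y1

definition R22_less :: "R22_elem \<Rightarrow> R22_elem \<Rightarrow> bool" where
  "R22_less a b \<longleftrightarrow> (a = X0 \<and> b = Y0) \<or> (a = X1 \<and> b = Y1)"

definition down_set :: "'a set \<Rightarrow> ('a \<Rightarrow> 'a \<Rightarrow> bool) \<Rightarrow> 'a \<Rightarrow> 'a set" where
  "down_set S lt x = {z \<in> S. lt z x}"

definition up_set :: "'a set \<Rightarrow> ('a \<Rightarrow> 'a \<Rightarrow> bool) \<Rightarrow> 'a \<Rightarrow> 'a set" where
  "up_set S lt x = {z \<in> S. lt x z}"

end

theory Submission
  imports Defs
begin

text \<open>
  A copy of \<open>R\<^sub>2\<^sub>,\<^sub>2\<close> is the same thing as a crossing: \<open>a < c\<close>, \<open>b < d\<close>, \<open>a \<nless> d\<close>, \<open>b \<nless> c\<close>;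
  transitivity rules out all further relations among the four points. A crossing is exactly
  a witness that \<open>u(a)\<close> and \<open>u(b)\<close> are incomparable (via \<open>c\<close> and \<open>d\<close>), and, read backwards,
  that \<open>d(c)\<close> and \<open>d(d)\<close> are incomparable (via \<open>a\<close> and \<open>b\<close>). The down-set statement is the
  up-set statement for the converse order, whose crossings are those of the original one.
\<close>

definition has_crossing :: "'a set \<Rightarrow> ('a \<Rightarrow> 'a \<Rightarrow> bool) \<Rightarrow> bool" where
  "has_crossing S lt \<longleftrightarrow>
     (\<exists>a\<in>S. \<exists>b\<in>S. \<exists>c\<in>S. \<exists>d\<in>S. lt a c \<and> lt b d \<and> \<not> lt a d \<and> \<not> lt b c)"

lemma has_crossing_converse: "has_crossing S (\<lambda>x y. lt y x) \<longleftrightarrow> has_crossing S lt"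
  unfolding has_crossing_def by blast

lemma down_set_eq_up_set_converse: "down_set S lt = up_set S (\<lambda>x y. lt y x)"
  unfolding down_set_def up_set_def by simp

lemma up_sets_comparable_iff_not_has_crossing:
  "(\<forall>x\<in>S. \<forall>x'\<in>S. up_set S lt x \<subseteq> up_set S lt x' \<or> up_set S lt x' \<subseteq> up_set S lt x)
     \<longleftrightarrow> \<not> has_crossing S lt"
  unfolding has_crossing_def up_set_def by blast

lemma has_crossing_if_embeds_R22:
  assumes "embeds (UNIV :: R22_elem set) R22_less S lt"
  shows "has_crossing S lt"
proof -
  obtain \<pi> where into: "\<pi> ` UNIV \<subseteq> S" and rel: "\<forall>x\<in>UNIV. \<forall>y\<in>UNIV. R22_less x y \<longleftrightarrow> lt (\<pi> x) (\<pi> y)"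
    using assms unfolding embeds_def by (elim exE conjE)
  have "lt (\<pi> X0) (\<pi> Y0)" "lt (\<pi> X1) (\<pi> Y1)" "\<not> lt (\<pi> X0) (\<pi> Y1)" "\<not> lt (\<pi> X1) (\<pi> Y0)"
    using rel[rule_format, of X0 Y0] rel[rule_format, of X1 Y1]
      rel[rule_format, of X0 Y1] rel[rule_format, of X1 Y0]
    by (simp_all add: R22_less_def)
  then show ?thesis
    unfolding has_crossing_def using into by blast
qed

lemma embeds_R22_if_crossing:
  assumes order: "strict_order S lt"
    and in_S: "a \<in> S" "b \<in> S" "c \<in> S" "d \<in> S"
    and cross: "lt a c" "lt b d" "\<not> lt a d" "\<not> lt b c"
  shows "embeds (UNIV :: R22_elem set) R22_less S lt"
proof -
  have irrefl: "\<And>x. x \<in> S \<Longrightarrow> \<not> lt x x"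
    and trans: "\<And>x y z. x \<in> S \<Longrightarrow> y \<in> S \<Longrightarrow> z \<in> S \<Longrightarrow> lt x y \<Longrightarrow> lt y z \<Longrightarrow> lt x z"
    using order unfolding strict_order_def by blast+
  have no_other_relations:
    "\<not> lt a b" "\<not> lt b a" "\<not> lt c d" "\<not> lt d c"
    "\<not> lt c a" "\<not> lt d b" "\<not> lt d a" "\<not> lt c b"
    using trans[of a b d] trans[of b a c] trans[of a c d] trans[of b d c]
      trans[of c a c] trans[of d b d] trans[of b d a] trans[of a c b]
      irrefl[of c] irrefl[of d] in_S cross by auto
  have distinct: "a \<noteq> b" "a \<noteq> c" "a \<noteq> d" "b \<noteq> c" "b \<noteq> d" "c \<noteq> d"
    using in_S irrefl cross no_other_relations by auto
  define \<pi> where "\<pi> = case_R22_elem a b c d"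
  have "inj \<pi>"
  proof (rule injI)
    show "\<pi> x = \<pi> y \<Longrightarrow> x = y" for x y
      using distinct by (cases x; cases y) (simp_all add: \<pi>_def)
  qed
  moreover have "\<pi> ` UNIV \<subseteq> S"
    using in_S by (auto simp: \<pi>_def split: R22_elem.splits)
  moreover have "R22_less x y \<longleftrightarrow> lt (\<pi> x) (\<pi> y)" for x y
    using in_S irrefl cross no_other_relations
    by (cases x; cases y) (simp_all add: \<pi>_def R22_less_def)
  ultimately show ?thesis
    unfolding embeds_def by (intro exI[of _ \<pi>]) simp
qed

lemma embeds_R22_iff_has_crossing:
  assumes "strict_order S lt"
  shows "embeds (UNIV :: R22_elem set) R22_less S lt \<longleftrightarrow> has_crossing S lt"
proof
  assume "has_crossing S lt"
  then obtain a b c d where "a \<in> S" "b \<in> S" "c \<in> S" "d \<in> S"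
    and "lt a c" "lt b d" "\<not> lt a d" "\<not> lt b c"
    unfolding has_crossing_def by blast
  then show "embeds (UNIV :: R22_elem set) R22_less S lt"
    by (rule embeds_R22_if_crossing[OF assms])
qed (rule has_crossing_if_embeds_R22)

theorem lemma2p4:
  fixes S :: "'a set" and lt :: "'a \<Rightarrow> 'a \<Rightarrow> bool"
  assumes "strict_order S lt"
  shows "(\<not> embeds (UNIV :: R22_elem set) R22_less S lt
            \<longleftrightarrow> (\<forall>x\<in>S. \<forall>x'\<in>S. up_set S lt x \<subseteq> up_set S lt x' \<or> up_set S lt x' \<subseteq> up_set S lt x))
       \<and> (\<not> embeds (UNIV :: R22_elem set) R22_less S lt
            \<longleftrightarrow> (\<forall>x\<in>S. \<forall>x'\<in>S. down_set S lt x \<subseteq> down_set S lt x' \<or> down_set S lt x' \<subseteq> down_set S lt x))"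
  unfolding embeds_R22_iff_has_crossing[OF assms] down_set_eq_up_set_converse
    up_sets_comparable_iff_not_has_crossing
  using has_crossing_converse[of S lt] by blast

end
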